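(* For every fixed $k,K\in\mathbf{N}$ there is a finite set of permutations $P$ such that $$\{\pi\in S:\ \mathrm{al}(\pi)<K\ \&\ s_k(\pi)<K\}\subset P[H_k^+\cup H_k^-].$$
   Context: $S_n$ is the set of permutations of $[n]$, $S=\bigcup_n S_n$; $\pi\prec\rho$ means $\rho$ has a subsequence order-isomorphic to $\pi$; $\pi|A$ is the permutation order-isomorphic to the subsequence of $\pi$ at positions in $A$. Alternating: $\sigma(\{1,3,5,\dots\})>\sigma(\{2,4,6,\dots\})$. $\mathrm{al}(\pi)$ is the maximum length of an alternating $\sigma$ with $\sigma\prec\pi$ or $\sigma\prec\pi^{-1}$. For $\sigma\in S_n,\tau\in S_m$, $\sigma\oplus\tau\in S_{n+m}$ equals $\sigma(i)$ at $i\le n$ and $n+\tau(i-n)$ at $i>n$; $\sigma\ominus\tau$ equals $m+\sigma(i)$ at $i\le n$ and $\tau(i-n)$ at $i>n$. Up-(down-)indecomposable means not of the form $\sigma\oplus\tau$ ($\sigma\ominus\tau$) with both nonempty; $h^+(\pi)$ ($h^-(\pi)$) is the maximum length of a block in the unique decomposition of $\pi$ as a $\oplus$-sum of up-indecomposables ($\ominus$-sum of down-indecomposables). $H_k^\pm=\{\pi\in S:h^\pm(\pi)<k\}$. For $k\ge2$ and $\pi\in S_n$, $s_k(\pi)$ is the number $r$ of intervals in the greedy partition $I_1<\dots<I_r$ of $[n]$ where $I_1$ is the longest initial interval with $\pi|I_1\in H_k^+\cup H_k^-$, $I_2$ the longest following interval with $\pi|I_2\in H_k^+\cup H_k^-$,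 etc.; $s_1(\pi)=\infty$ by convention. Inflation: for $\sigma\in S_m$ and $\tau_i\in S_{n_i}$ ($i=1,\dots,m$), $\sigma[\tau_1,\dots,\tau_m]\in S_{n_1+\dots+n_m}$ is the permutation whose positions split into consecutive intervals of lengths $n_1,\dots,n_m$, such that the restriction to the $i$-th interval is order-isomorphic to $\tau_i$, and the $i$-th and $j$-th intervals' value sets are intervals of integers ordered as $\sigma(i)$ versus $\sigma(j)$ (i.e. each point of $\sigma$ is replaced by a small copy of $\tau_i$). For sets $P,Q\subset S$, $P[Q]=\{\pi[\sigma_1,\dots,\sigma_m]: m\in\mathbf{N},\ \pi\in P\cap S_m,\ \sigma_i\in Q\}$. *)

theory Defs
  imports Main "HOL-Library.Extended_Nat"
begin

text \<open>Permutations of [n] are represented 0-based as lists: a list xs is a permutation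
  of length n iff it is distinct and its set of values is {0..<n}.\<close>

definition is_perm :: "nat list \<Rightarrow> bool" where
  "is_perm xs \<longleftrightarrow> distinct xs \<and> set xs = {0..<length xs}"

definition std :: "nat list \<Rightarrow> nat list" where
  "std xs = map (\<lambda>x. card {y \<in> set xs. y < x}) xs"

text \<open>pi|A : pattern of pi at the positions in A (0-based positions).\<close>
definition restr :: "nat list \<Rightarrow> nat set \<Rightarrow> nat list" where
  "restr p A = std (nths p A)"

definition contained :: "nat list \<Rightarrow> nat list \<Rightarrow> bool" where
  "contained s p \<longleftrightarrow> (\<exists>A \<subseteq> {..<length p}. restr p A = s)"

definition inv_perm :: "nat list \<Rightarrow> nat list" where
  "inv_perm p = map (\<lambda>i. THE j. j < length p \<and> p ! j = i) [0..<length p]"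

text \<open>Alternating: values at odd (1-based) positions exceed values at even (1-based)
  positions; 0-based this means even indices beat odd indices.\<close>
definition alternating :: "nat list \<Rightarrow> bool" where
  "alternating s \<longleftrightarrow>
     (\<forall>i j. i < length s \<and> j < length s \<and> even i \<and> odd j \<longrightarrow> s ! j < s ! i)"

definition al :: "nat list \<Rightarrow> nat" where
  "al p = Max {length s | s. is_perm s \<and> alternating s \<and>
                             (contained s p \<or> contained s (inv_perm p))}"

definition oplus :: "nat list \<Rightarrow> nat list \<Rightarrow> nat list" where
  "oplus s t = s @ map (\<lambda>v. v + length s) t"

definition ominus :: "nat list \<Rightarrow> nat list \<Rightarrow> nat list" where
  "ominus s t = map (\<lambda>v. v + length t) s @ t"

definition up_indecomposable :: "nat list \<Rightarrow> bool" where
  "up_indecomposable p \<longleftrightarrow>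
     \<not> (\<exists>s t. is_perm s \<and> is_perm t \<and> s \<noteq> [] \<and> t \<noteq> [] \<and> p = oplus s t)"

definition down_indecomposable :: "nat list \<Rightarrow> bool" where
  "down_indecomposable p \<longleftrightarrow>
     \<not> (\<exists>s t. is_perm s \<and> is_perm t \<and> s \<noteq> [] \<and> t \<noteq> [] \<and> p = ominus s t)"

fun oplus_list :: "nat list list \<Rightarrow> nat list" where
  "oplus_list [] = []"
| "oplus_list (b # bs) = oplus b (oplus_list bs)"

fun ominus_list :: "nat list list \<Rightarrow> nat list" where
  "ominus_list [] = []"
| "ominus_list (b # bs) = ominus b (ominus_list bs)"

text \<open>h^+ (resp. h^-): maximal block length in the unique decomposition into
  up-(down-)indecomposable blocks (0 for the empty permutation).\<close>
definition h_plus :: "nat list \<Rightarrow> nat" where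
  "h_plus p = (THE m. \<exists>bs. p = oplus_list bs \<and>
       (\<forall>b \<in> set bs. is_perm b \<and> b \<noteq> [] \<and> up_indecomposable b) \<and>
       m = Max (insert 0 (length ` set bs)))"

definition h_minus :: "nat list \<Rightarrow> nat" where
  "h_minus p = (THE m. \<exists>bs. p = ominus_list bs \<and>
       (\<forall>b \<in> set bs. is_perm b \<and> b \<noteq> [] \<and> down_indecomposable b) \<and>
       m = Max (insert 0 (length ` set bs)))"

definition H_plus :: "nat \<Rightarrow> nat list set" where
  "H_plus k = {p. is_perm p \<and> h_plus p < k}"

definition H_minus :: "nat \<Rightarrow> nat list set" where
  "H_minus k = {p. is_perm p \<and> h_minus p < k}"

text \<open>Greedy partition count, applied to the remaining suffix of positions.
  The pattern of an interval is the standardisation of the corresponding sublist.\<close>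
function greedy :: "nat \<Rightarrow> nat list \<Rightarrow> nat" where
  "greedy k [] = 0"
| "greedy k (x # xs) =
     Suc (greedy k (drop (max 1 (GREATEST l. l \<le> length (x # xs) \<and>
                                std (take l (x # xs)) \<in> H_plus k \<union> H_minus k)) (x # xs)))"
  by pat_completeness auto
termination
  by (relation "measure (\<lambda>(k, xs). length xs)") auto

definition s_k :: "nat \<Rightarrow> nat list \<Rightarrow> enat" where
  "s_k k p = (if k \<le> 1 then \<infinity> else enat (greedy k p))"

definition inflate :: "nat list \<Rightarrow> nat list list \<Rightarrow> nat list" where
  "inflate s ts = concat (map (\<lambda>i. map (\<lambda>v. v +
        sum_list (map (\<lambda>l. length (ts ! l)) (filter (\<lambda>l. s ! l < s ! i) [0..<length s])))
        (ts ! i)) [0..<length s])"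

definition inflations :: "nat list set \<Rightarrow> nat list set \<Rightarrow> nat list set" where
  "inflations P Q = {inflate s ts | s ts. s \<in> P \<and> is_perm s \<and> length ts = length s \<and>
                        (\<forall>t \<in> set ts. t \<in> Q \<and> is_perm t \<and> t \<noteq> [])}"

end

(*
  Cut pi greedily into s_k(pi) < K segments whose patterns lie in H_k^+ or H_k^-.  Such a
  segment is a direct sum (or skew sum) of blocks of size < k, and every run of consecutive
  blocks again has its pattern in H_k^+ or H_k^-.  Call a value v of a segment a break if v + 1
  is not in the segment.  Apart from the largest value of pi, v and v + 1 then lie on opposite
  sides of the cut just before or just after the segment.  The values crossing a fixed cut in
  this way yield an increasing sequence alternating between the two sides of the cut (take v
  or v + 1 according to parity), i.e. an alternating pattern of pi^-1; so a segment has at most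
  1 + 2 al(pi) breaks.  Splitting each block that contains a break into singletons leaves runs
  of blocks whose values form intervals.  Hence pi is cut into at most K (1 + 2K (k + 1))
  pieces, each an interval of positions and of values with pattern in H_k^+ or H_k^-: pi is an
  inflation of a permutation of bounded length.  For k = 1 there is nothing to prove, since
  s_1 = infinity.
*)

theory Submission
  imports Defs "HOL-Library.Sublist"
begin

section \<open>Permutations and standardisation\<close>

lemma is_perm_iff_bounded: "is_perm xs \<longleftrightarrow> distinct xs \<and> (\<forall>x\<in>set xs. x < length xs)"
proof
  assume "distinct xs \<and> (\<forall>x\<in>set xs. x < length xs)"
  then have "set xs \<subseteq> {0..<length xs}" "card (set xs) = card {0..<length xs}" "distinct xs"
    by (auto simp: distinct_card)
  then show "is_perm xs"
    unfolding is_perm_def by (metis card_subset_eq finite_atLeastLessThan)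
qed (auto simp: is_perm_def)

lemma is_perm_Nil [simp]: "is_perm []"
  by (simp add: is_perm_def)

lemma length_std [simp]: "length (std xs) = length xs"
  by (simp add: std_def)

lemma std_eq_Nil_iff [simp]: "std xs = [] \<longleftrightarrow> xs = []"
  by (simp add: std_def)

lemma std_singleton [simp]: "std [x] = [0]"
  by (simp add: std_def)

lemma std_nth: "i < length xs \<Longrightarrow> std xs ! i = card {y \<in> set xs. y < xs ! i}"
  by (simp add: std_def)

lemma strict_mono_on_card_less: "strict_mono_on S (\<lambda>x::nat. card {y \<in> S. y < x})"
proof (rule strict_mono_onI)
  fix x y assume "x \<in> S" "x < y"
  then have "{z \<in> S. z < x} \<subset> {z \<in> S. z < y}" by auto
  moreover have "finite {z \<in> S. z < y}" by simp
  ultimately show "card {z \<in> S. z < x} < card {z \<in> S. z < y}" by (rule psubset_card_mono[rotated])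
qed

lemma std_less_iff:
  assumes "i < length xs" "j < length xs"
  shows "std xs ! i < std xs ! j \<longleftrightarrow> xs ! i < xs ! j"
  using strict_mono_on_less[OF strict_mono_on_card_less, of "xs ! i" "set xs" "xs ! j"] assms
  by (simp add: std_nth)

lemma is_perm_std:
  assumes "distinct xs" shows "is_perm (std xs)"
  unfolding is_perm_iff_bounded
proof
  have "inj_on (\<lambda>x. card {y \<in> set xs. y < x}) (set xs)"
    using strict_mono_on_imp_inj_on[OF strict_mono_on_card_less] .
  then show "distinct (std xs)" using assms by (simp add: std_def distinct_map)
  have "card {y \<in> set xs. y < x} < length xs" if "x \<in> set xs" for x
    using that psubset_card_mono[of "set xs" "{y \<in> set xs. y < x}"] assms
    by (auto simp: distinct_card)
  then show "\<forall>x\<in>set (std xs). x < length (std xs)" by (auto simp: std_def)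
qed

lemma std_interval:
  assumes "set u = {lo..<lo + length u}"
  shows "std u = map (\<lambda>x. x - lo) u"
proof -
  have "{y \<in> set u. y < x} = {lo..<x}" if "x \<in> set u" for x
    using assms that by auto
  then show ?thesis by (simp add: std_def)
qed

lemma std_append_less:
  assumes "distinct (xs @ ys)" "\<forall>x\<in>set xs. \<forall>y\<in>set ys. x < y"
  shows "std (xs @ ys) = oplus (std xs) (std ys)"
proof -
  have "{y \<in> set (xs @ ys). y < x} = {y \<in> set xs. y < x}" if "x \<in> set xs" for x
    using assms(2) that by fastforce
  moreover have "card {y \<in> set (xs @ ys). y < z} = length xs + card {y \<in> set ys. y < z}"
    if "z \<in> set ys" for z
  proof -
    have "{y \<in> set (xs @ ys). y < z} = set xs \<union> {y \<in> set ys. y < z}"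
      using assms(2) that by fastforce
    then show ?thesis using assms(1) by (simp add: card_Un_disjoint disjoint_iff distinct_card)
  qed
  ultimately show ?thesis by (simp add: std_def oplus_def)
qed

section \<open>Direct sums and complements\<close>

lemma length_oplus [simp]: "length (oplus s t) = length s + length t"
  by (simp add: oplus_def)

lemma oplus_Nil [simp]: "oplus [] t = t" "oplus s [] = s"
  by (simp_all add: oplus_def)

lemma oplus_assoc: "oplus (oplus r s) t = oplus r (oplus s t)"
  by (simp add: oplus_def add.assoc)

lemma oplus_list_append: "oplus_list (bs @ cs) = oplus (oplus_list bs) (oplus_list cs)"
  by (induction bs) (simp_all add: oplus_assoc)

lemma length_oplus_list: "length (oplus_list bs) = sum_list (map length bs)"
  by (induction bs) simp_all

lemma is_perm_oplus: "is_perm s \<Longrightarrow> is_perm t \<Longrightarrow> is_perm (oplus s t)"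
  by (auto simp: is_perm_iff_bounded oplus_def distinct_map inj_on_def)

lemma is_perm_oplus_list: "\<forall>b\<in>set bs. is_perm b \<Longrightarrow> is_perm (oplus_list bs)"
  by (induction bs) (simp_all add: is_perm_oplus)

definition complement :: "nat list \<Rightarrow> nat list" where
  "complement p = map (\<lambda>v. length p - Suc v) p"

lemma length_complement [simp]: "length (complement p) = length p"
  by (simp add: complement_def)

lemma complement_eq_Nil_iff [simp]: "complement p = [] \<longleftrightarrow> p = []"
  by (simp add: complement_def)

lemma is_perm_complement:
  assumes "is_perm p" shows "is_perm (complement p)"
proof -
  have "inj_on (\<lambda>v. length p - Suc v) (set p)"
  proof (rule inj_onI)
    fix x y assume "x \<in> set p" "y \<in> set p" "length p - Suc x = length p - Suc y"
    moreover have "x < length p" "y < length p" using assms calculation by (auto simp: is_perm_iff_bounded)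
    ultimately show "x = y" by linarith
  qed
  then show ?thesis using assms by (auto simp: is_perm_iff_bounded complement_def distinct_map)
qed

lemma complement_complement: "is_perm p \<Longrightarrow> complement (complement p) = p"
  by (auto simp: is_perm_iff_bounded complement_def intro!: map_idI)

lemma complement_oplus:
  assumes "is_perm s" "is_perm t"
  shows "complement (oplus s t) = ominus (complement s) (complement t)"
  using assms by (auto simp: is_perm_iff_bounded complement_def oplus_def ominus_def)

lemma ominus_eq_complement_oplus:
  assumes "is_perm s" "is_perm t"
  shows "ominus s t = complement (oplus (complement s) (complement t))"
  using complement_oplus[OF is_perm_complement[OF assms(1)] is_perm_complement[OF assms(2)]] assms
  by (simp add: complement_complement)

lemma complement_oplus_list:
  "\<forall>b\<in>set bs. is_perm b \<Longrightarrow> complement (oplus_list bs) = ominus_list (map complement bs)"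
proof (induction bs)
  case (Cons b bs)
  then show ?case by (simp add: complement_oplus is_perm_oplus_list)
qed (simp add: complement_def)

lemma complement_ominus_list:
  assumes "\<forall>b\<in>set bs. is_perm b"
  shows "complement (ominus_list bs) = oplus_list (map complement bs)"
proof -
  have "ominus_list bs = complement (oplus_list (map complement bs))"
    using complement_oplus_list[of "map complement bs"] assms
    by (simp add: is_perm_complement complement_complement map_idI)
  then show ?thesis
    using assms by (simp add: complement_complement is_perm_oplus_list is_perm_complement)
qed

lemma down_indecomposable_complement_iff:
  assumes "is_perm p"
  shows "down_indecomposable (complement p) \<longleftrightarrow> up_indecomposable p"
proof
  assume "down_indecomposable (complement p)"
  then show "up_indecomposable p"
    using assms complement_oplus is_perm_complement
    unfolding up_indecomposable_def down_indecomposable_def by (metis length_0_conv length_complement)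
next
  assume up: "up_indecomposable p"
  show "down_indecomposable (complement p)"
    unfolding down_indecomposable_def
  proof
    assume "\<exists>s t. is_perm s \<and> is_perm t \<and> s \<noteq> [] \<and> t \<noteq> [] \<and> complement p = ominus s t"
    then obtain s t where st: "is_perm s" "is_perm t" "s \<noteq> []" "t \<noteq> []" "complement p = ominus s t"
      by blast
    then have "p = oplus (complement s) (complement t)"
      using assms by (metis ominus_eq_complement_oplus complement_complement is_perm_complement is_perm_oplus)
    then show False
      using up st by (metis up_indecomposable_def is_perm_complement length_0_conv length_complement)
  qed
qed

lemma std_map_diff:
  assumes "distinct xs" "\<forall>x\<in>set xs. x \<le> N"
  shows "std (map (\<lambda>x. N - x) xs) = complement (std xs)"
proof -
  have "card {y \<in> (\<lambda>x. N - x) ` set xs. y < N - x} = length xs - Suc (card {y \<in> set xs. y < x})"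
    if x: "x \<in> set xs" for x
  proof -
    have "{y \<in> (\<lambda>x. N - x) ` set xs. y < N - x} = (\<lambda>x. N - x) ` {y \<in> set xs. x < y}"
      using assms(2) x by force
    moreover have "inj_on (\<lambda>x. N - x) {y \<in> set xs. x < y}"
      using assms(2) by (intro inj_onI) (metis (no_types, lifting) diff_diff_cancel mem_Collect_eq)
    ultimately have reversed: "card {y \<in> (\<lambda>x. N - x) ` set xs. y < N - x} = card {y \<in> set xs. x < y}"
      by (simp add: card_image)
    have "set xs = insert x ({y \<in> set xs. y < x} \<union> {y \<in> set xs. x < y})"
      using x by auto
    then have "length xs = card (insert x ({y \<in> set xs. y < x} \<union> {y \<in> set xs. x < y}))"
      using assms(1) distinct_card[of xs] by (metis arg_cong[of _ _ card])
    also have "\<dots> = Suc (card {y \<in> set xs. y < x} + card {y \<in> set xs. x < y})"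
      by (simp add: card_Un_disjoint disjoint_iff)
    finally show ?thesis using reversed by simp
  qed
  then show ?thesis by (simp add: std_def complement_def)
qed

section \<open>Decomposition into up-indecomposable blocks\<close>

definition up_decomposition :: "nat list list \<Rightarrow> bool" where
  "up_decomposition bs \<longleftrightarrow> (\<forall>b\<in>set bs. is_perm b \<and> b \<noteq> [] \<and> up_indecomposable b)"

lemma oplus_prefix:
  assumes "is_perm (b @ r)" "is_perm b"
  shows "\<exists>t. is_perm t \<and> b @ r = oplus b t"
proof (intro exI conjI)
  have "set r = set (b @ r) - set b"
    using assms(1) by (auto simp: is_perm_def)
  then have r: "set r = {length b..<length b + length r}"
    using assms by (auto simp: is_perm_def)
  show "b @ r = oplus b (map (\<lambda>v. v - length b) r)"
    using r by (auto simp: oplus_def intro!: map_idI[symmetric])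
  have "inj_on (\<lambda>v. v - length b) (set r)"
    using r by (auto simp: inj_on_def)
  then show "is_perm (map (\<lambda>v. v - length b) r)"
    using assms(1) r by (auto simp: is_perm_iff_bounded distinct_map)
qed

lemma oplus_indecomposable_length_le:
  assumes "is_perm b" "b \<noteq> []" "is_perm b'" "up_indecomposable b'" "oplus b X = oplus b' Y"
  shows "length b' \<le> length b"
proof (rule ccontr)
  assume less: "\<not> length b' \<le> length b"
  have "take (length b) b' = b"
    using arg_cong[OF assms(5), of "take (length b)"] less by (simp add: oplus_def)
  then have "b' = b @ drop (length b) b'"
    by (metis append_take_drop_id)
  then obtain t where "is_perm t" "b' = oplus b t"
    using oplus_prefix assms(1,3) by metis
  moreover have "t \<noteq> []" using calculation(2) less by auto
  ultimately show False
    using assms(1,2,4) by (auto simp: up_indecomposable_def)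
qed

lemma oplus_indecomposable_cancel:
  assumes "up_decomposition [b, b']" "oplus b X = oplus b' Y"
  shows "b = b' \<and> X = Y"
proof -
  have "length b = length b'"
    using oplus_indecomposable_length_le assms by (metis le_antisym list.set_intros up_decomposition_def)
  then show ?thesis
    using assms(2) by (auto simp: oplus_def append_eq_append_conv inj_map_eq_map inj_on_def)
qed

lemma up_decomposition_unique:
  "up_decomposition bs \<Longrightarrow> up_decomposition bs' \<Longrightarrow> oplus_list bs = oplus_list bs' \<Longrightarrow> bs = bs'"
proof (induction bs arbitrary: bs')
  case Nil
  then show ?case
    by (cases bs') (auto simp: up_decomposition_def oplus_def)
next
  case (Cons b bs)
  then obtain b' bs'' where bs': "bs' = b' # bs''"
    by (cases bs') (auto simp: up_decomposition_def oplus_def)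
  then have "b = b' \<and> oplus_list bs = oplus_list bs''"
    using Cons.prems by (intro oplus_indecomposable_cancel) (auto simp: up_decomposition_def)
  then show ?case
    using Cons bs' by (auto simp: up_decomposition_def)
qed

lemma up_decomposition_exists: "is_perm p \<Longrightarrow> \<exists>bs. up_decomposition bs \<and> p = oplus_list bs"
proof (induction "length p" arbitrary: p rule: less_induct)
  case less
  consider "p = []" | "p \<noteq> []" "up_indecomposable p"
    | s t where "is_perm s" "is_perm t" "s \<noteq> []" "t \<noteq> []" "p = oplus s t"
    unfolding up_indecomposable_def by blast
  then show ?case
  proof cases
    case 1
    then show ?thesis by (intro exI[of _ "[]"]) (simp add: up_decomposition_def)
  next
    case 2
    then show ?thesis
      using less.prems by (intro exI[of _ "[p]"]) (simp add: up_decomposition_def)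
  next
    case 3
    then obtain bs cs where "up_decomposition bs" "s = oplus_list bs" "up_decomposition cs" "t = oplus_list cs"
      using less by (metis length_oplus less_add_same_cancel1 less_add_same_cancel2 length_greater_0_conv)
    then show ?thesis
      using 3 by (intro exI[of _ "bs @ cs"]) (auto simp: up_decomposition_def oplus_list_append)
  qed
qed

lemma h_plus_oplus_list:
  assumes "up_decomposition bs"
  shows "h_plus (oplus_list bs) = Max (insert 0 (length ` set bs))"
  unfolding h_plus_def
  using assms up_decomposition_unique by (intro the_equality) (auto simp: up_decomposition_def)

lemma up_decomposition_refines:
  "\<forall>b\<in>set bs. is_perm b \<and> length b < k \<Longrightarrow>
    \<exists>cs. up_decomposition cs \<and> (\<forall>c\<in>set cs. length c < k) \<and> oplus_list cs = oplus_list bs"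
proof (induction bs)
  case Nil
  then show ?case by (intro exI[of _ "[]"]) (simp add: up_decomposition_def)
next
  case (Cons b bs)
  obtain ds where ds: "up_decomposition ds" "b = oplus_list ds"
    using up_decomposition_exists Cons.prems by auto
  then have "\<forall>d\<in>set ds. length d < k"
    using Cons.prems member_le_sum_list[of _ "map length ds"] by (fastforce simp: length_oplus_list)
  moreover obtain cs where "up_decomposition cs" "\<forall>c\<in>set cs. length c < k" "oplus_list cs = oplus_list bs"
    using Cons by auto
  ultimately show ?case
    using ds by (intro exI[of _ "ds @ cs"]) (auto simp: up_decomposition_def oplus_list_append)
qed

lemma H_plus_iff:
  assumes "0 < k"
  shows "p \<in> H_plus k \<longleftrightarrow> (\<exists>bs. (\<forall>b\<in>set bs. is_perm b \<and> b \<noteq> [] \<and> length b < k) \<and> p = oplus_list bs)"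
proof
  assume "p \<in> H_plus k"
  moreover obtain bs where "up_decomposition bs" "p = oplus_list bs"
    using up_decomposition_exists calculation by (auto simp: H_plus_def)
  ultimately show "\<exists>bs. (\<forall>b\<in>set bs. is_perm b \<and> b \<noteq> [] \<and> length b < k) \<and> p = oplus_list bs"
    by (auto simp: H_plus_def h_plus_oplus_list up_decomposition_def)
next
  assume "\<exists>bs. (\<forall>b\<in>set bs. is_perm b \<and> b \<noteq> [] \<and> length b < k) \<and> p = oplus_list bs"
  then obtain cs where "up_decomposition cs" "\<forall>c\<in>set cs. length c < k" "p = oplus_list cs"
    using up_decomposition_refines by (metis (no_types, lifting))
  then show "p \<in> H_plus k"
    using assms by (auto simp: H_plus_def h_plus_oplus_list is_perm_oplus_list up_decomposition_def)
qed

lemma h_minus_complement: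
  assumes "is_perm p"
  shows "h_minus (complement p) = h_plus p"
proof -
  have "(\<exists>bs. complement p = ominus_list bs \<and>
          (\<forall>b\<in>set bs. is_perm b \<and> b \<noteq> [] \<and> down_indecomposable b) \<and> m = Max (insert 0 (length ` set bs)))
    \<longleftrightarrow> (\<exists>bs. p = oplus_list bs \<and> up_decomposition bs \<and> m = Max (insert 0 (length ` set bs)))" for m
  proof
    assume "\<exists>bs. complement p = ominus_list bs \<and>
          (\<forall>b\<in>set bs. is_perm b \<and> b \<noteq> [] \<and> down_indecomposable b) \<and> m = Max (insert 0 (length ` set bs))"
    then obtain bs where bs: "complement p = ominus_list bs"
      "\<forall>b\<in>set bs. is_perm b \<and> b \<noteq> [] \<and> down_indecomposable b" "m = Max (insert 0 (length ` set bs))"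
      by blast
    then have "p = oplus_list (map complement bs)"
      using assms complement_ominus_list[of bs] by (metis complement_complement)
    moreover have "up_decomposition (map complement bs)"
      using bs(2) down_indecomposable_complement_iff[OF is_perm_complement]
      by (auto simp: up_decomposition_def is_perm_complement complement_complement)
    ultimately show "\<exists>bs. p = oplus_list bs \<and> up_decomposition bs \<and> m = Max (insert 0 (length ` set bs))"
      using bs(3) by (intro exI[of _ "map complement bs"]) (simp add: image_image)
  next
    assume "\<exists>bs. p = oplus_list bs \<and> up_decomposition bs \<and> m = Max (insert 0 (length ` set bs))"
    then obtain bs where "p = oplus_list bs" "up_decomposition bs" "m = Max (insert 0 (length ` set bs))"
      by blast
    then show "\<exists>bs. complement p = ominus_list bs \<and>
          (\<forall>b\<in>set bs. is_perm b \<and> b \<noteq> [] \<and> down_indecomposable b) \<and> m = Max (insert 0 (length ` set bs))"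
      by (intro exI[of _ "map complement bs"])
        (auto simp: up_decomposition_def complement_oplus_list is_perm_complement
          down_indecomposable_complement_iff image_image)
  qed
  then show ?thesis
    unfolding h_minus_def h_plus_def up_decomposition_def by simp
qed

lemma H_minus_iff: "p \<in> H_minus k \<longleftrightarrow> is_perm p \<and> complement p \<in> H_plus k"
  using h_minus_complement[OF is_perm_complement, of p]
  by (auto simp: H_minus_def H_plus_def is_perm_complement complement_complement)

lemma Nil_in_H_plus: "0 < k \<Longrightarrow> [] \<in> H_plus k"
  using H_plus_iff[of k "[]"] by (metis empty_iff empty_set oplus_list.simps(1))

lemma singleton_in_H_plus: "1 < k \<Longrightarrow> [0] \<in> H_plus k"
  using H_plus_iff[of k "[0]"] by (fastforce intro: exI[of _ "[[0]]"] simp: is_perm_def)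

section \<open>Block structure of lists with pattern in H\<close>

definition blocks_ordered :: "(nat \<Rightarrow> nat \<Rightarrow> bool) \<Rightarrow> nat list list \<Rightarrow> bool" where
  "blocks_ordered R cs \<longleftrightarrow> sorted_wrt (\<lambda>c c'. \<forall>x\<in>set c. \<forall>y\<in>set c'. R x y) cs"

lemma oplus_eq_oplus_iff: "length a = length a' \<Longrightarrow> oplus a b = oplus a' b' \<longleftrightarrow> a = a' \<and> b = b'"
  by (auto simp: oplus_def inj_map_eq_map inj_on_def)

lemma std_eq_oplus_list_split:
  "distinct s \<Longrightarrow> std s = oplus_list bs \<Longrightarrow> \<forall>b\<in>set bs. is_perm b \<Longrightarrow>
    \<exists>cs. concat cs = s \<and> map std cs = bs \<and> blocks_ordered (<) cs"
proof (induction bs arbitrary: s)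
  case Nil
  then have "s = []" by simp
  then show ?case by (intro exI[of _ "[]"]) (simp add: blocks_ordered_def)
next
  case (Cons b bs)
  define m where "m = length b"
  have std_s: "std s = oplus b (oplus_list bs)" using Cons.prems by simp
  have len: "length s = m + length (oplus_list bs)"
    using arg_cong[OF std_s, of length] by (simp add: m_def)
  have "s ! i < s ! j" if "i < m" "m \<le> j" "j < length s" for i j
  proof -
    have "b ! i < m" using Cons.prems that by (auto simp: is_perm_def m_def)
    then have "std s ! i < std s ! j"
      using std_s that len by (simp add: oplus_def nth_append m_def)
    then show ?thesis using std_less_iff that by simp
  qed
  then have less: "\<forall>x\<in>set (take m s). \<forall>y\<in>set (drop m s). x < y"
    by (fastforce simp: in_set_conv_nth)
  then have "std s = oplus (std (take m s)) (std (drop m s))"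
    using std_append_less[of "take m s" "drop m s"] Cons.prems(1) by simp
  moreover have "length (std (take m s)) = length b"
    using len by (simp add: m_def)
  ultimately have "std (take m s) = b" "std (drop m s) = oplus_list bs"
    using oplus_eq_oplus_iff std_s by metis+
  moreover obtain cs where cs: "concat cs = drop m s" "map std cs = bs" "blocks_ordered (<) cs"
    using Cons.IH[of "drop m s"] Cons.prems calculation by auto
  moreover have "\<forall>c\<in>set cs. \<forall>x\<in>set (take m s). \<forall>y\<in>set c. x < y"
    using less by (auto simp flip: cs(1))
  ultimately show ?case
    by (intro exI[of _ "take m s # cs"]) (auto simp: blocks_ordered_def)
qed

lemma std_concat_increasing:
  "distinct (concat g) \<Longrightarrow> blocks_ordered (<) g \<Longrightarrow> std (concat g) = oplus_list (map std g)"
proof (induction g)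
  case (Cons c g)
  then show ?case by (simp add: std_append_less blocks_ordered_def)
qed (simp add: std_def)

lemma H_plus_block_split:
  assumes "0 < k" "distinct s" "std s \<in> H_plus k"
  shows "\<exists>cs. concat cs = s \<and> (\<forall>c\<in>set cs. c \<noteq> [] \<and> length c < k) \<and> blocks_ordered (<) cs \<and>
    (\<forall>g. sublist g cs \<longrightarrow> std (concat g) \<in> H_plus k)"
proof -
  obtain bs where bs: "\<forall>b\<in>set bs. is_perm b \<and> b \<noteq> [] \<and> length b < k" "std s = oplus_list bs"
    using H_plus_iff[OF assms(1)] assms(3) by blast
  then obtain cs where cs: "concat cs = s" "map std cs = bs" "blocks_ordered (<) cs"
    using std_eq_oplus_list_split assms(2) by blast
  have "std (concat g) \<in> H_plus k" if "sublist g cs" for g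
  proof -
    have "distinct (concat g)" "blocks_ordered (<) g"
      using that assms(2) cs(1,3) by (auto simp: sublist_def blocks_ordered_def sorted_wrt_append)
    then have "std (concat g) = oplus_list (map std g)"
      by (rule std_concat_increasing)
    moreover have "set (map std g) \<subseteq> set bs"
      using that cs(2) by (auto simp: sublist_def)
    then have "\<forall>b\<in>set (map std g). is_perm b \<and> b \<noteq> [] \<and> length b < k"
      using bs(1) by blast
    ultimately show ?thesis
      unfolding H_plus_iff[OF assms(1)] by (intro exI[of _ "map std g"]) simp
  qed
  moreover have "\<forall>c\<in>set cs. c \<noteq> [] \<and> length c < k"
    using bs(1) cs(2) by auto
  ultimately show ?thesis using cs by blast
qed

lemma blocks_ordered_map_diff:
  assumes "blocks_ordered (<) cs" "\<forall>x\<in>set (concat cs). x \<le> N"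
  shows "blocks_ordered (>) (map (map (\<lambda>x. N - x)) cs)"
  unfolding blocks_ordered_def sorted_wrt_map
proof (rule sorted_wrt_mono_rel[OF _ assms(1)[unfolded blocks_ordered_def]])
  fix c c' assume c: "c \<in> set cs" "c' \<in> set cs" "\<forall>x\<in>set c. \<forall>y\<in>set c'. x < y"
  show "\<forall>x\<in>set (map (\<lambda>x. N - x) c). \<forall>y\<in>set (map (\<lambda>x. N - x) c'). x > y"
  proof (intro ballI)
    fix x y assume "x \<in> set (map (\<lambda>x. N - x) c)" "y \<in> set (map (\<lambda>x. N - x) c')"
    then obtain x' y' where "x' \<in> set c" "y' \<in> set c'" "x = N - x'" "y = N - y'"
      by auto
    moreover have "x' < y'" "y' \<le> N"
      using calculation c assms(2) by auto
    ultimately show "x > y" by linarith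
  qed
qed

lemma std_map_diff_in_H_minus_iff:
  assumes "distinct xs" "\<forall>x\<in>set xs. x \<le> N"
  shows "std (map (\<lambda>x. N - x) xs) \<in> H_minus k \<longleftrightarrow> std xs \<in> H_plus k"
  using assms by (simp add: std_map_diff H_minus_iff is_perm_complement is_perm_std complement_complement)

lemma H_minus_block_split:
  assumes "0 < k" "distinct s" "std s \<in> H_minus k"
  shows "\<exists>cs. concat cs = s \<and> (\<forall>c\<in>set cs. c \<noteq> [] \<and> length c < k) \<and> blocks_ordered (>) cs \<and>
    (\<forall>g. sublist g cs \<longrightarrow> std (concat g) \<in> H_minus k)"
proof -
  define N where "N = Max (set s)"
  define mirror where "mirror = map (\<lambda>x::nat. N - x)"
  have s_le: "\<forall>x\<in>set s. x \<le> N" by (simp add: N_def)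
  have mirror_s: "mirror (mirror s) = s"
    using s_le by (auto simp: mirror_def intro!: map_idI)
  have "inj_on (\<lambda>x. N - x) (set s)"
    using s_le by (intro inj_onI) (metis diff_diff_cancel)
  then have distinct: "distinct (mirror s)" using assms(2) by (simp add: mirror_def distinct_map)
  moreover have mirror_le: "\<forall>x\<in>set (mirror s). x \<le> N" by (simp add: mirror_def)
  ultimately have "std (mirror s) \<in> H_plus k"
    using std_map_diff_in_H_minus_iff[of "mirror s" N k] assms(3) mirror_s by (simp add: mirror_def)
  then obtain cs where cs: "concat cs = mirror s" "\<forall>c\<in>set cs. c \<noteq> [] \<and> length c < k"
    "blocks_ordered (<) cs" "\<forall>g. sublist g cs \<longrightarrow> std (concat g) \<in> H_plus k"
    using H_plus_block_split[OF assms(1) distinct] by blast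
  have "concat (map mirror cs) = mirror (concat cs)"
    by (simp add: mirror_def map_concat)
  then have "concat (map mirror cs) = s"
    using cs(1) mirror_s by simp
  moreover have "blocks_ordered (>) (map mirror cs)"
    using blocks_ordered_map_diff[OF cs(3)] mirror_le by (simp add: mirror_def cs(1))
  moreover have "std (concat g) \<in> H_minus k" if g: "sublist g (map mirror cs)" for g
  proof -
    obtain g' where g': "sublist g' cs" "g = map mirror g'"
      using sublist_map_rightE[OF g] by blast
    then have "set (concat g') \<subseteq> set (mirror s)" "distinct (concat g')"
      using distinct by (auto simp: sublist_def simp flip: cs(1))
    moreover have "\<forall>x\<in>set (concat g'). x \<le> N"
      using calculation(1) mirror_le by blast
    ultimately have "std (mirror (concat g')) \<in> H_minus k"
      using std_map_diff_in_H_minus_iff[of "concat g'" N k] g'(1) cs(4) by (simp add: mirror_def)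
    then show ?thesis
      using g'(2) by (simp add: mirror_def map_concat)
  qed
  ultimately show ?thesis
    using cs(2) by (intro exI[of _ "map mirror cs"]) (auto simp: mirror_def)
qed

lemma H_block_split:
  assumes "0 < k" "distinct s" "std s \<in> H_plus k \<union> H_minus k"
  shows "\<exists>cs. concat cs = s \<and> (\<forall>c\<in>set cs. c \<noteq> [] \<and> length c < k) \<and>
    (blocks_ordered (<) cs \<or> blocks_ordered (>) cs) \<and>
    (\<forall>g. sublist g cs \<longrightarrow> std (concat g) \<in> H_plus k \<union> H_minus k)"
  using assms(3) H_plus_block_split[OF assms(1,2)] H_minus_block_split[OF assms(1,2)] by blast

section \<open>Cutting a segment into value intervals\<close>

definition value_interval :: "nat list \<Rightarrow> bool" where
  "value_interval u \<longleftrightarrow> set u = {Min (set u)..<Min (set u) + length u}"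

definition breaks :: "nat list \<Rightarrow> nat set" where
  "breaks s = {v \<in> set s. Suc v \<notin> set s}"

fun group_runs :: "('a list \<Rightarrow> bool) \<Rightarrow> 'a list list \<Rightarrow> 'a list list \<Rightarrow> 'a list list" where
  "group_runs bad run [] = (if run = [] then [] else [concat run])"
| "group_runs bad run (c # cs) =
    (if bad c then (if run = [] then [] else [concat run]) @ map (\<lambda>x. [x]) c @ group_runs bad [] cs
     else group_runs bad (run @ [c]) cs)"

lemma concat_group_runs: "concat (group_runs bad run cs) = concat run @ concat cs"
  by (induction bad run cs rule: group_runs.induct) (simp_all add: concat_map_singleton)

lemma length_group_runs:
  "\<forall>c\<in>set cs. length c \<le> k \<Longrightarrow> length (group_runs bad run cs) \<le> 1 + (k + 1) * length (filter bad cs)"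
  by (induction bad run cs rule: group_runs.induct) (auto simp: algebra_simps)

lemma set_group_runs:
  "\<forall>c\<in>set run. \<not> bad c \<Longrightarrow> u \<in> set (group_runs bad run cs) \<Longrightarrow>
    (\<exists>x. u = [x]) \<or> (\<exists>g. sublist g (run @ cs) \<and> g \<noteq> [] \<and> (\<forall>c\<in>set g. \<not> bad c) \<and> u = concat g)"
proof (induction bad run cs rule: group_runs.induct)
  case (1 bad run)
  then show ?case by (auto split: if_splits)
next
  case (2 bad run c cs)
  show ?case
  proof (cases "bad c")
    case True
    then consider "run \<noteq> []" "u = concat run" | "u \<in> (\<lambda>x. [x]) ` set c" | "u \<in> set (group_runs bad [] cs)"
      using "2.prems"(2) by (auto split: if_splits)
    then show ?thesis
    proof cases
      case 3
      have "sublist cs (run @ c # cs)"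
        using sublist_append_leftI[of cs "run @ [c]"] by simp
      then show ?thesis
        using "2.IH"(1)[OF True _ 3] by (auto intro: sublist_order.order.trans)
    qed (use "2.prems" in auto)
  next
    case False
    then show ?thesis using "2.IH"(2) "2.prems" by simp
  qed
qed

lemma length_filter_meets_le_card:
  assumes "distinct (concat cs)" "finite X"
  shows "length (filter (\<lambda>c. set c \<inter> X \<noteq> {}) cs) \<le> card X"
  using assms
proof (induction cs arbitrary: X)
  case (Cons c cs)
  show ?case
  proof (cases "set c \<inter> X = {}")
    case False
    have "filter (\<lambda>c. set c \<inter> X \<noteq> {}) cs = filter (\<lambda>c'. set c' \<inter> (X - set c) \<noteq> {}) cs"
      using Cons.prems(1) by (intro filter_cong) auto
    moreover have "card (X - set c) < card X"
      using False Cons.prems(2) by (intro psubset_card_mono) auto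
    ultimately show ?thesis
      using Cons.IH[of "X - set c"] Cons.prems False by simp
  qed (use Cons in simp)
qed simp

lemma Suc_closed_imp_interval:
  assumes "finite A" "A \<noteq> {}" "\<forall>v\<in>A. v < Max A \<longrightarrow> Suc v \<in> A"
  shows "A = {Min A..Max A}"
proof -
  have "Min A + d \<in> A" if "Min A + d \<le> Max A" for d
    using that
  proof (induction d)
    case 0
    then show ?case using assms by simp
  next
    case (Suc d)
    then show ?case using assms(3) by fastforce
  qed
  then have "{Min A..Max A} \<subseteq> A"
    by (metis atLeastAtMost_iff le_add_diff_inverse subsetI)
  then show ?thesis using assms by auto
qed

lemma between_blocks_in_run:
  assumes "blocks_ordered R cs" "R = (<) \<or> R = (>)" "sublist g cs"
    and "c \<in> set cs" "x \<in> set c" "y \<in> set (concat g)" "z \<in> set (concat g)" "y < x" "x < z"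
  shows "c \<in> set g"
proof -
  obtain A C where cs: "cs = A @ g @ C"
    using assms(3) by (auto simp: sublist_def)
  obtain b b' where b: "b \<in> set g" "y \<in> set b" "b' \<in> set g" "z \<in> set b'"
    using assms(6,7) by auto
  have "c \<notin> set A"
  proof
    assume "c \<in> set A"
    then have "R x y" "R x z"
      using assms(1,5) b unfolding cs blocks_ordered_def sorted_wrt_append set_append by blast+
    then show False using assms(2,8,9) by auto
  qed
  moreover have "c \<notin> set C"
  proof
    assume "c \<in> set C"
    then have "R y x" "R z x"
      using assms(1,5) b unfolding cs blocks_ordered_def sorted_wrt_append set_append by blast+
    then show False using assms(2,8,9) by auto
  qed
  ultimately show ?thesis using assms(4) cs by auto
qed

lemma run_value_interval:
  assumes "distinct s" "concat cs = s" "blocks_ordered R cs" "R = (<) \<or> R = (>)"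
    and "sublist g cs" "concat g \<noteq> []" "\<forall>c\<in>set g. set c \<inter> breaks s = {}"
  shows "value_interval (concat g)"
proof -
  define A where "A = set (concat g)"
  have fin: "finite A" and ne: "A \<noteq> {}" using assms(6) by (auto simp: A_def)
  \<comment> \<open>Suc v lies in s as v is no break, and between two values of the run, hence in one of its blocks.\<close>
  have "Suc v \<in> A" if v: "v \<in> A" "v < Max A" for v
  proof -
    have "v \<in> set s" "v \<notin> breaks s"
      using v(1) assms(2,5,7) by (auto simp: A_def sublist_def)
    then obtain c where c: "c \<in> set cs" "Suc v \<in> set c"
      using assms(2) by (auto simp: breaks_def)
    show ?thesis
    proof (cases "Suc v = Max A")
      case False
      moreover have "Max A \<in> A" using fin ne by simp
      ultimately have "c \<in> set g"
        using between_blocks_in_run[OF assms(3,4,5) c, of v "Max A"] v by (simp add: A_def)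
      then show ?thesis using c(2) by (auto simp: A_def)
    qed (use fin ne in simp)
  qed
  then have "A = {Min A..Max A}"
    using Suc_closed_imp_interval fin ne by blast
  moreover have "distinct (concat g)"
    using assms(1,2,5) by (auto simp: sublist_def)
  then have "card A = length (concat g)"
    unfolding A_def by (rule distinct_card)
  moreover have "Min A \<le> Max A" using fin ne by simp
  ultimately have "A = {Min A..<Min A + length (concat g)}"
    by (metis atLeastLessThanSuc_atLeastAtMost card_atLeastLessThan le_add_diff_inverse le_Suc_eq)
  then show ?thesis
    unfolding value_interval_def A_def .
qed

lemma H_segment_units:
  assumes "1 < k" "distinct s" "std s \<in> H_plus k \<union> H_minus k"
  shows "\<exists>us. concat us = s \<and> length us \<le> 1 + (k + 1) * card (breaks s) \<and>
    (\<forall>u\<in>set us. u \<noteq> [] \<and> value_interval u \<and> std u \<in> H_plus k \<union> H_minus k)"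
proof -
  obtain cs where cs: "concat cs = s" "\<forall>c\<in>set cs. c \<noteq> [] \<and> length c < k"
    "blocks_ordered (<) cs \<or> blocks_ordered (>) cs"
    "\<forall>g. sublist g cs \<longrightarrow> std (concat g) \<in> H_plus k \<union> H_minus k"
    using H_block_split[of k s] assms by auto
  then obtain R where R: "blocks_ordered R cs" "R = (<) \<or> R = (>)"
    by blast
  define bad where "bad c \<longleftrightarrow> set c \<inter> breaks s \<noteq> {}" for c
  define us where "us = group_runs bad [] cs"
  have concat_us: "concat us = s"
    by (simp add: us_def concat_group_runs cs(1))
  have "length us \<le> 1 + (k + 1) * length (filter bad cs)"
    unfolding us_def using cs(2) by (intro length_group_runs) (simp add: less_imp_le)
  moreover have "length (filter bad cs) \<le> card (breaks s)"
    unfolding bad_def using assms(2) cs(1) by (intro length_filter_meets_le_card) (auto simp: breaks_def)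
  ultimately have "length us \<le> 1 + (k + 1) * card (breaks s)"
    by (meson add_le_mono le_refl mult_le_mono2 order_trans)
  moreover have "u \<noteq> [] \<and> value_interval u \<and> std u \<in> H_plus k \<union> H_minus k" if u: "u \<in> set us" for u
  proof -
    consider x where "u = [x]" | g where "sublist g cs" "g \<noteq> []" "\<forall>c\<in>set g. \<not> bad c" "u = concat g"
      using set_group_runs[of "[]" bad u cs] u by (auto simp: us_def)
    then show ?thesis
    proof cases
      case 1
      then show ?thesis
        using singleton_in_H_plus[OF assms(1)] by (simp add: value_interval_def)
    next
      case 2
      then have "concat g \<noteq> []"
        using cs(2) by (metis concat_eq_Nil_conv neq_Nil_conv set_mono_sublist subsetD list.set_intros(1))
      then show ?thesis
        using 2 cs(4) run_value_interval[OF assms(2) cs(1) R] by (auto simp: bad_def)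
    qed
  qed
  ultimately show ?thesis using concat_us by blast
qed

section \<open>Crossings and alternating patterns\<close>

lemma length_inv_perm [simp]: "length (inv_perm p) = length p"
  by (simp add: inv_perm_def)

lemma inv_perm_nth_nth:
  assumes "is_perm p" "i < length p"
  shows "inv_perm p ! (p ! i) = i"
proof -
  have "p ! i < length p" using assms by (auto simp: is_perm_def)
  then have "inv_perm p ! (p ! i) = (THE j. j < length p \<and> p ! j = p ! i)"
    by (simp add: inv_perm_def)
  also have "\<dots> = i"
    using assms by (intro the_equality) (auto simp: is_perm_def nth_eq_iff_index_eq)
  finally show ?thesis .
qed

lemma nth_inv_perm:
  assumes "is_perm p" "v < length p"
  shows "p ! (inv_perm p ! v) = v"
proof -
  obtain i where "i < length p" "v = p ! i"
    using assms by (metis atLeastLessThan_iff in_set_conv_nth is_perm_def zero_le)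
  then show ?thesis using inv_perm_nth_nth assms(1) by simp
qed

lemma nths_strict_sorted:
  assumes "sorted_wrt (<) ws" "\<forall>i\<in>set ws. i < length xs"
  shows "nths xs (set ws) = map ((!) xs) ws"
proof -
  have "set (nths [0..<length xs] (set ws)) = set ws"
    using assms(2) by (force simp: set_nths)
  then have "nths [0..<length xs] (set ws) = ws"
    using assms(1) by (intro sorted_distinct_set_unique) (auto simp: sorted_nths strict_sorted_iff)
  then show ?thesis
    by (metis map_nth nths_map)
qed

lemma length_le_if_contained: "contained s p \<Longrightarrow> length s \<le> length p"
  unfolding contained_def restr_def
  by (auto simp: nths_def intro!: order_trans[OF length_filter_le])

lemma length_le_al:
  assumes "is_perm s" "alternating s" "contained s p \<or> contained s (inv_perm p)"
  shows "length s \<le> al p"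
proof -
  define S where "S = {length s | s. is_perm s \<and> alternating s \<and> (contained s p \<or> contained s (inv_perm p))}"
  have "S \<subseteq> {..length p}"
    using length_le_if_contained[of _ p] length_le_if_contained[of _ "inv_perm p"]
    by (fastforce simp: S_def)
  then have "finite S" by (rule finite_subset) simp
  moreover have "length s \<in> S" using assms by (auto simp: S_def)
  ultimately show ?thesis by (simp add: al_def S_def[symmetric])
qed

lemma inv_perm_append_less:
  assumes "is_perm (xs @ ys)" "v \<in> set xs"
  shows "inv_perm (xs @ ys) ! v < length xs"
proof -
  obtain i where "i < length xs" "v = xs ! i" using assms(2) by (auto simp: in_set_conv_nth)
  then show ?thesis using assms(1) inv_perm_nth_nth[of "xs @ ys" i] by (simp add: nth_append)
qed

lemma inv_perm_append_ge:
  assumes "is_perm (xs @ ys)" "v \<in> set ys"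
  shows "length xs \<le> inv_perm (xs @ ys) ! v"
proof -
  obtain i where "i < length ys" "v = ys ! i" using assms(2) by (auto simp: in_set_conv_nth)
  then show ?thesis using assms(1) inv_perm_nth_nth[of "xs @ ys" "length xs + i"] by simp
qed

lemma alternating_list_le_al:
  assumes perm: "is_perm (xs @ ys)" and sorted: "sorted_wrt (<) ws"
    and sides: "\<forall>t<length ws. ws ! t \<in> set (if even t then ys else xs)"
  shows "length ws \<le> al (xs @ ys)"
proof -
  define q where "q = inv_perm (xs @ ys)"
  define z where "z = map ((!) q) ws"
  have ws_bounded: "\<forall>v\<in>set ws. v < length (xs @ ys)"
  proof
    fix v assume "v \<in> set ws"
    then obtain t where "t < length ws" "v = ws ! t" by (auto simp: in_set_conv_nth)
    then have "v \<in> set (xs @ ys)" using sides by (auto split: if_splits)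
    then show "v < length (xs @ ys)" using perm by (simp add: is_perm_iff_bounded)
  qed
  have "inj_on ((!) q) (set ws)"
  proof (rule inj_onI)
    fix a b assume "a \<in> set ws" "b \<in> set ws" "q ! a = q ! b"
    then show "a = b" using ws_bounded nth_inv_perm[OF perm] by (metis q_def)
  qed
  then have "distinct z"
    using sorted by (simp add: z_def distinct_map strict_sorted_iff)
  have "nths q (set ws) = z"
    using nths_strict_sorted[OF sorted, of q] ws_bounded by (simp add: z_def q_def)
  then have "contained (std z) q"
    unfolding contained_def restr_def using ws_bounded by (intro exI[of _ "set ws"]) (auto simp: q_def)
  moreover have "alternating (std z)"
    unfolding alternating_def
  proof (intro allI impI)
    fix i j assume "i < length (std z) \<and> j < length (std z) \<and> even i \<and> odd j"
    then have ij: "i < length ws" "j < length ws" "even i" "odd j" by (auto simp: z_def)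
    then have "ws ! j \<in> set xs" "ws ! i \<in> set ys"
      using sides by auto
    then have "z ! j < z ! i"
      using inv_perm_append_less[OF perm] inv_perm_append_ge[OF perm] ij
      by (fastforce simp: z_def q_def)
    then show "std z ! j < std z ! i"
      using std_less_iff ij by (simp add: z_def)
  qed
  ultimately have "length (std z) \<le> al (xs @ ys)"
    using length_le_al[of "std z"] is_perm_std[OF \<open>distinct z\<close>] by (simp add: q_def)
  then show ?thesis by (simp add: z_def)
qed

definition crossings :: "nat list \<Rightarrow> nat list \<Rightarrow> nat set" where
  "crossings xs ys = {v. v \<in> set xs \<and> Suc v \<in> set ys \<or> v \<in> set ys \<and> Suc v \<in> set xs}"

lemma finite_crossings: "finite (crossings xs ys)"
  by (rule finite_subset[of _ "set xs \<union> set ys"]) (auto simp: crossings_def)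

lemma card_crossings_le_al:
  assumes perm: "is_perm (xs @ ys)"
  shows "card (crossings xs ys) \<le> al (xs @ ys)"
proof -
  define side where "side t = set (if even t then ys else xs)" for t :: nat
  define vs where "vs = sorted_list_of_set (crossings xs ys)"
  \<comment> \<open>From the crossing pair {v, Suc v} with index t take the element on the side prescribed by
    the parity of t; consecutive picks lie on different sides, hence increase strictly.\<close>
  define w where "w t = (if vs ! t \<in> side t then vs ! t else Suc (vs ! t))" for t
  have disjoint: "set xs \<inter> set ys = {}"
    using perm by (auto simp: is_perm_def)
  have vs: "sorted_wrt (<) vs" "set vs = crossings xs ys" "length vs = card (crossings xs ys)"
    using finite_crossings by (simp_all add: vs_def)
  have w_side: "w t \<in> side t" if "t < length vs" for t
  proof -
    have "vs ! t \<in> crossings xs ys" using vs(2) that nth_mem by blast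
    then show ?thesis by (auto simp: w_def side_def crossings_def)
  qed
  have "w t < w (Suc t)" if "Suc t < length vs" for t
  proof -
    have "vs ! t < vs ! Suc t" using vs(1) that sorted_wrt_nth_less by blast
    moreover have "w t \<le> Suc (vs ! t)" "vs ! Suc t \<le> w (Suc t)" by (simp_all add: w_def)
    moreover have "w t \<noteq> w (Suc t)"
      using w_side[of t] w_side[of "Suc t"] disjoint that by (auto simp: side_def split: if_splits)
    ultimately show ?thesis by linarith
  qed
  then have "sorted_wrt (<) (map w [0..<length vs])"
    by (simp add: sorted_wrt_iff_nth_Suc_transp transp_on_less)
  moreover have "\<forall>t<length (map w [0..<length vs]). map w [0..<length vs] ! t \<in> set (if even t then ys else xs)"
    using w_side by (simp add: side_def)
  ultimately show ?thesis
    using alternating_list_le_al[OF perm] vs(3) by fastforce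
qed

lemma card_breaks_le_al:
  assumes perm: "is_perm (xs @ s @ ys)"
  shows "card (breaks s) \<le> 1 + 2 * al (xs @ s @ ys)"
proof -
  define n where "n = length (xs @ s @ ys)"
  have "breaks s \<subseteq> insert (n - 1) (crossings xs (s @ ys) \<union> crossings (xs @ s) ys)"
  proof
    fix v assume v: "v \<in> breaks s"
    then have "v < n" using perm by (auto simp: breaks_def is_perm_iff_bounded n_def)
    show "v \<in> insert (n - 1) (crossings xs (s @ ys) \<union> crossings (xs @ s) ys)"
    proof (cases "Suc v < n")
      case True
      then have "Suc v \<in> set (xs @ s @ ys)" using perm by (simp add: is_perm_def n_def)
      then show ?thesis using v by (auto simp: breaks_def crossings_def)
    next
      case False
      then have "v = n - 1" using \<open>v < n\<close> by linarith
      then show ?thesis by simp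
    qed
  qed
  then have "card (breaks s) \<le> card (insert (n - 1) (crossings xs (s @ ys) \<union> crossings (xs @ s) ys))"
    by (simp add: card_mono finite_crossings)
  also have "\<dots> \<le> 1 + card (crossings xs (s @ ys) \<union> crossings (xs @ s) ys)"
    by (simp add: card_insert_if finite_crossings)
  also have "\<dots> \<le> 1 + card (crossings xs (s @ ys)) + card (crossings (xs @ s) ys)"
    using card_Un_le by simp
  also have "\<dots> \<le> 1 + 2 * al (xs @ s @ ys)"
    using card_crossings_le_al[of xs "s @ ys"] card_crossings_le_al[of "xs @ s" ys] perm by simp
  finally show ?thesis .
qed

section \<open>Inflations of value intervals\<close>

lemma disjoint_nth_blocks:
  "distinct (concat us) \<Longrightarrow> i < length us \<Longrightarrow> j < length us \<Longrightarrow> i \<noteq> j \<Longrightarrow>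
    set (us ! i) \<inter> set (us ! j) = {}"
proof (induction us arbitrary: i j)
  case (Cons u us)
  then show ?case
    by (cases i; cases j) (fastforce simp: nth_Cons')+
qed simp

lemma distinct_Min_blocks:
  assumes "distinct (concat us)" "\<forall>u\<in>set us. u \<noteq> []"
  shows "distinct (map (\<lambda>u. Min (set u)) us)"
proof -
  have "Min (set (us ! i)) \<noteq> Min (set (us ! j))" if "i < length us" "j < length us" "i \<noteq> j" for i j
    using disjoint_nth_blocks[OF assms(1) that] assms(2) that by (metis Min_in disjoint_iff finite_set nth_mem set_empty)
  then show ?thesis by (auto simp: distinct_conv_nth)
qed

lemma blocks_below_Min:
  assumes perm: "is_perm (concat us)" and blocks: "\<forall>u\<in>set us. u \<noteq> [] \<and> value_interval u"
    and i: "i < length us"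
  shows "(\<Union>l\<in>{l. l < length us \<and> Min (set (us ! l)) < Min (set (us ! i))}. set (us ! l)) =
    {..<Min (set (us ! i))}"
proof -
  define lo where "lo l = Min (set (us ! l))" for l
  have ivl: "set (us ! l) = {lo l..<lo l + length (us ! l)}" "lo l \<in> set (us ! l)" if "l < length us" for l
    using blocks nth_mem[OF that] by (auto simp: value_interval_def lo_def)
  have disjoint: "set (us ! l) \<inter> set (us ! l') = {}" if "l < length us" "l' < length us" "l \<noteq> l'" for l l'
    using perm that disjoint_nth_blocks[of us] by (simp add: is_perm_def)
  have "x < lo i" if "l < length us" "lo l < lo i" "x \<in> set (us ! l)" for l x
  proof (rule ccontr)
    assume "\<not> x < lo i"
    then have "lo i \<in> set (us ! l)" using ivl(1)[of l] that by auto
    then show False using disjoint[OF that(1) i] ivl(2)[OF i] that(2) by blast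
  qed
  moreover have "\<exists>l<length us. lo l < lo i \<and> y \<in> set (us ! l)" if "y < lo i" for y
  proof -
    have "lo i \<in> set (concat us)" using ivl(2)[OF i] i by auto
    then have "lo i < length (concat us)" using perm unfolding is_perm_iff_bounded by blast
    then have "y \<in> set (concat us)" using perm that by (simp add: is_perm_def)
    then obtain u where "u \<in> set us" "y \<in> set u" by auto
    then obtain l where "l < length us" "y \<in> set (us ! l)" by (metis in_set_conv_nth)
    then show ?thesis using ivl(1) that by fastforce
  qed
  ultimately show ?thesis by (auto simp: lo_def)
qed

lemma sum_lengths_below_Min:
  assumes perm: "is_perm (concat us)" and blocks: "\<forall>u\<in>set us. u \<noteq> [] \<and> value_interval u"
    and i: "i < length us"
  shows "(\<Sum>l | l < length us \<and> Min (set (us ! l)) < Min (set (us ! i)). length (us ! l)) =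
    Min (set (us ! i))"
proof -
  have "distinct (concat us)" using perm by (simp add: is_perm_def)
  then have "(\<Sum>l | l < length us \<and> Min (set (us ! l)) < Min (set (us ! i)). length (us ! l)) =
      (\<Sum>l | l < length us \<and> Min (set (us ! l)) < Min (set (us ! i)). card (set (us ! l)))"
    by (intro sum.cong) (auto simp: distinct_card distinct_concat_iff)
  also have "\<dots> = card (\<Union>l\<in>{l. l < length us \<and> Min (set (us ! l)) < Min (set (us ! i))}. set (us ! l))"
    using \<open>distinct (concat us)\<close> disjoint_nth_blocks by (intro card_UN_disjoint[symmetric]) auto
  also have "\<dots> = Min (set (us ! i))"
    using blocks_below_Min[OF assms] by simp
  finally show ?thesis .
qed

lemma inflate_value_intervals:
  assumes perm: "is_perm (concat us)" and blocks: "\<forall>u\<in>set us. u \<noteq> [] \<and> value_interval u"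
  shows "inflate (std (map (\<lambda>u. Min (set u)) us)) (map std us) = concat us"
proof -
  define \<sigma> where "\<sigma> = std (map (\<lambda>u. Min (set u)) us)"
  define lo where "lo l = Min (set (us ! l))" for l
  have offset: "sum_list (map (\<lambda>l. length (map std us ! l)) (filter (\<lambda>l. \<sigma> ! l < \<sigma> ! i) [0..<length us]))
      = lo i" if i: "i < length us" for i
  proof -
    have "filter (\<lambda>l. \<sigma> ! l < \<sigma> ! i) [0..<length us] = filter (\<lambda>l. lo l < lo i) [0..<length us]"
      using i std_less_iff[of _ "map (\<lambda>u. Min (set u)) us"] by (intro filter_cong) (auto simp: \<sigma>_def lo_def)
    then have "sum_list (map (\<lambda>l. length (map std us ! l)) (filter (\<lambda>l. \<sigma> ! l < \<sigma> ! i) [0..<length us]))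
        = (\<Sum>l | l < length us \<and> lo l < lo i. length (us ! l))"
      by (simp add: sum_list_distinct_conv_sum_set)
    then show ?thesis
      using sum_lengths_below_Min[OF perm blocks i] by (simp add: lo_def)
  qed
  have block: "map (\<lambda>v. v + lo i) (std (us ! i)) = us ! i" if i: "i < length us" for i
  proof -
    have "set (us ! i) = {lo i..<lo i + length (us ! i)}"
      using blocks nth_mem[OF i] by (auto simp: value_interval_def lo_def)
    then show ?thesis
      using std_interval i by (auto intro!: map_idI)
  qed
  have length_\<sigma>: "length \<sigma> = length us" by (simp add: \<sigma>_def)
  have "inflate \<sigma> (map std us) = concat (map ((!) us) [0..<length us])"
    unfolding inflate_def
    by (rule arg_cong[where f = concat], rule map_cong) (simp_all add: length_\<sigma> offset block)
  then show ?thesis by (simp add: \<sigma>_def map_nth)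
qed

lemma greedy_segments:
  "1 < k \<Longrightarrow> \<exists>segs. length segs = greedy k xs \<and> concat segs = xs \<and>
    (\<forall>s\<in>set segs. s \<noteq> [] \<and> std s \<in> H_plus k \<union> H_minus k)"
proof (induction k xs rule: greedy.induct)
  case (1 k)
  then show ?case by (intro exI[of _ "[]"]) simp
next
  case (2 k x xs)
  define ys where "ys = x # xs"
  define l where "l = (GREATEST l. l \<le> length ys \<and> std (take l ys) \<in> H_plus k \<union> H_minus k)"
  define seg where "seg = take (max 1 l) ys"
  have "l \<le> length ys \<and> std (take l ys) \<in> H_plus k \<union> H_minus k"
    unfolding l_def
  proof (rule GreatestI_nat[where b = "length ys"])
    show "0 \<le> length ys \<and> std (take 0 ys) \<in> H_plus k \<union> H_minus k"
      using Nil_in_H_plus "2.prems" by (simp add: std_def)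
  qed simp
  then have seg: "seg \<noteq> [] \<and> std seg \<in> H_plus k \<union> H_minus k"
  proof (cases "l = 0")
    case True
    then show ?thesis using singleton_in_H_plus[OF "2.prems"] by (simp add: seg_def ys_def)
  qed (simp add: seg_def ys_def)
  obtain segs where "length segs = greedy k (drop (max 1 l) ys)" "concat segs = drop (max 1 l) ys"
    "\<forall>s\<in>set segs. s \<noteq> [] \<and> std s \<in> H_plus k \<union> H_minus k"
    using "2.IH" "2.prems" unfolding l_def ys_def by blast
  then show ?case
    using seg by (intro exI[of _ "seg # segs"]) (simp add: seg_def ys_def l_def)
qed

lemma concat_refine:
  assumes "\<forall>s\<in>set segs. \<exists>us. concat us = s \<and> length us \<le> c \<and> (\<forall>u\<in>set us. P u)"
  shows "\<exists>us. concat us = concat segs \<and> length us \<le> length segs * c \<and> (\<forall>u\<in>set us. P u)"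
  using assms
proof (induction segs)
  case (Cons s segs)
  then obtain us vs where "concat us = s" "length us \<le> c" "\<forall>u\<in>set us. P u"
    "concat vs = concat segs" "length vs \<le> length segs * c" "\<forall>u\<in>set vs. P u"
    by auto
  then show ?case by (intro exI[of _ "us @ vs"]) auto
qed simp

lemma unit_decomposition:
  assumes "1 < k" "is_perm p" "al p < K" "greedy k p < K"
  shows "\<exists>us. concat us = p \<and> length us \<le> K * (1 + (k + 1) * (2 * K)) \<and>
    (\<forall>u\<in>set us. u \<noteq> [] \<and> value_interval u \<and> std u \<in> H_plus k \<union> H_minus k)"
proof -
  obtain segs where segs: "length segs = greedy k p" "concat segs = p"
    "\<forall>s\<in>set segs. s \<noteq> [] \<and> std s \<in> H_plus k \<union> H_minus k"
    using greedy_segments[OF assms(1)] by blast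
  have "\<exists>us. concat us = s \<and> length us \<le> 1 + (k + 1) * (2 * K) \<and>
      (\<forall>u\<in>set us. u \<noteq> [] \<and> value_interval u \<and> std u \<in> H_plus k \<union> H_minus k)"
    if s: "s \<in> set segs" for s
  proof -
    obtain xs ys where p: "p = concat xs @ s @ concat ys"
      using split_list[OF s] segs(2) by auto
    then have "card (breaks s) \<le> 2 * K"
      using card_breaks_le_al[of "concat xs" s "concat ys"] assms(2,3) by simp
    moreover have "distinct s" using assms(2) p by (simp add: is_perm_def)
    then obtain us where "concat us = s" "length us \<le> 1 + (k + 1) * card (breaks s)"
      "\<forall>u\<in>set us. u \<noteq> [] \<and> value_interval u \<and> std u \<in> H_plus k \<union> H_minus k"
      using H_segment_units[OF assms(1)] segs(3) s by blast
    moreover have "1 + (k + 1) * card (breaks s) \<le> 1 + (k + 1) * (2 * K)"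
      using calculation(1) by (simp only: add_le_mono1 mult_le_mono2 nat_add_left_cancel_le)
    ultimately show ?thesis by (intro exI[of _ us]) simp
  qed
  then obtain us where us: "concat us = p" "length us \<le> length segs * (1 + (k + 1) * (2 * K))"
    "\<forall>u\<in>set us. u \<noteq> [] \<and> value_interval u \<and> std u \<in> H_plus k \<union> H_minus k"
    using concat_refine[of segs] segs(2) by blast
  have "length segs * (1 + (k + 1) * (2 * K)) \<le> K * (1 + (k + 1) * (2 * K))"
    using segs(1) assms(4) by (intro mult_le_mono1) simp
  then show ?thesis
    using us by (intro exI[of _ us]) simp
qed

lemma concat_value_intervals_in_inflations:
  assumes perm: "is_perm (concat us)" and units: "\<forall>u\<in>set us. u \<noteq> [] \<and> value_interval u \<and> std u \<in> Q"
    and P: "{\<sigma>. is_perm \<sigma> \<and> length \<sigma> = length us} \<subseteq> P"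
  shows "concat us \<in> inflations P Q"
proof -
  define \<sigma> where "\<sigma> = std (map (\<lambda>u. Min (set u)) us)"
  have "distinct (map (\<lambda>u. Min (set u)) us)"
    using perm units by (intro distinct_Min_blocks) (auto simp: is_perm_def)
  then have "\<sigma> \<in> P" "is_perm \<sigma>"
    using P is_perm_std by (auto simp: \<sigma>_def)
  moreover have "inflate \<sigma> (map std us) = concat us"
    using inflate_value_intervals perm units by (simp add: \<sigma>_def)
  moreover have "\<forall>t\<in>set (map std us). t \<in> Q \<and> is_perm t \<and> t \<noteq> []"
    using perm units is_perm_std by (auto simp: is_perm_def distinct_concat_iff)
  ultimately show ?thesis
    unfolding inflations_def by (intro CollectI exI[of _ \<sigma>] exI[of _ "map std us"]) (simp add: \<sigma>_def)
qed

theorem mainTheorem6: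
  fixes k K :: nat
  assumes "1 \<le> k"
  shows "\<exists>P. finite P \<and> (\<forall>s \<in> P. is_perm s) \<and>
           {p. is_perm p \<and> al p < K \<and> s_k k p < enat K}
             \<subseteq> inflations P (H_plus k \<union> H_minus k)"
proof (cases "k = 1")
  case True
  then show ?thesis by (intro exI[of _ "{}"]) (simp add: s_k_def)
next
  case False
  then have k: "1 < k" using assms by simp
  define M where "M = K * (1 + (k + 1) * (2 * K))"
  define P where "P = {\<sigma>. is_perm \<sigma> \<and> length \<sigma> \<le> M}"
  have "finite P"
    by (rule finite_subset[OF _ finite_lists_length_le[of "{..<M}" M]]) (auto simp: P_def is_perm_def)
  moreover have "p \<in> inflations P (H_plus k \<union> H_minus k)"
    if p: "is_perm p" "al p < K" "s_k k p < enat K" for p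
  proof -
    obtain us where us: "concat us = p" "length us \<le> M"
      "\<forall>u\<in>set us. u \<noteq> [] \<and> value_interval u \<and> std u \<in> H_plus k \<union> H_minus k"
      using unit_decomposition[OF k p(1,2)] p(3) k unfolding M_def by (auto simp: s_k_def)
    moreover have "{\<sigma>. is_perm \<sigma> \<and> length \<sigma> = length us} \<subseteq> P"
      using us(2) by (auto simp: P_def)
    ultimately show ?thesis
      using concat_value_intervals_in_inflations[of us] p(1) by blast
  qed
  ultimately show ?thesis by (intro exI[of _ P]) (auto simp: P_def)
qed

end
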